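(* Let $p$ be a complex polynomial and $c\in\mathbb C\setminus\{0\}$. (i) If there exists $\alpha\in\mathbb C$ with $|\alpha|<1$, $\alpha p'(\alpha)+cp(\alpha)=0$ and $|p(\alpha)-1|<1$, then $\mathrm D(p,c)\neq\{0\}$ and $\big[N,-\frac ic\log p(L)\big]=-i\mathbf 1$ on $\mathrm D(p,c)$. (ii) If $p$ is not of the form $p(x)=bx^m$ with $b\in\mathbb C$, $m\in\mathbb N$, then any subspace $\mathcal D\subset \mathcal E\cap\mathrm D(N\log p(L))\cap\mathrm D(\log p(L)N)$ such that $[N,\log p(L)]\varphi=c\varphi$ for all $\varphi\in\mathcal D$ is finite-dimensional, where $\mathcal E$ is the set of $\varphi\in\ell^2$ for which $\sum_{k=1}^\infty\frac1kN(\mathbf1-p(L))^k\varphi$ converges.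
   Context: $\ell^2=\ell^2(\mathbb N)$, $\mathbb N=\{0,1,\dots\}$, basis $(\xi_n)$; $N\xi_n=n\xi_n$ (self-adjoint, maximal domain); $L$ is the left shift $L\xi_n=\xi_{n-1}$, $L\xi_0=0$; $p(L)$ is the bounded operator obtained by substituting $L$ into $p$. For a linear operator $A$, $\mathrm D(\log A)=\{f\in\bigcap_{k\ge0}\mathrm D(A^k):\lim_K\sum_{k=1}^K\frac1k(\mathbf1-A)^kf\text{ exists}\}$, $\log Af=-\sum_{k\ge1}\frac1k(\mathbf1-A)^kf$. $\mathrm D(p,c)$ is the linear hull of all $\varphi\in\mathrm D(N)$ for which there is $\alpha\in\mathbb C$ with $|p(\alpha)-1|<1$, $\alpha p'(\alpha)+cp(\alpha)=0$ and $\varphi\in\ker(L-\alpha\mathbf1)$. Commutators $[A,B]=AB-BA$ on $\mathrm D(AB)\cap\mathrm D(BA)$; "$[A,B]=C$ on $\mathcal D$" means $\mathcal D\subset \mathrm D(AB)\cap\mathrm D(BA)$ and $(AB-BA)\varphi=C\varphi$ on $\mathcal D$. *)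

theory Defs
  imports "HOL-Analysis.Analysis" "HOL-Computational_Algebra.Polynomial"
begin

text \<open>Sequences indexed by the basis xi_n; l2 is the Hilbert space ell^2(N).\<close>
type_synonym seq = "nat \<Rightarrow> complex"

definition l2 :: "seq set" where
  "l2 = {f. summable (\<lambda>n. (cmod (f n))\<^sup>2)}"

definition l2norm :: "seq \<Rightarrow> real" where
  "l2norm f = sqrt (\<Sum>n. (cmod (f n))\<^sup>2)"

definition l2_conv :: "(nat \<Rightarrow> seq) \<Rightarrow> seq \<Rightarrow> bool" where
  "l2_conv g x \<longleftrightarrow> x \<in> l2 \<and> (\<forall>K. g K \<in> l2) \<and>
      (\<lambda>K. l2norm (\<lambda>n. g K n - x n)) \<longlonglongrightarrow> 0"

text \<open>A (possibly unbounded) linear operator: (domain, action).\<close>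
type_synonym op = "seq set \<times> (seq \<Rightarrow> seq)"

definition dom :: "op \<Rightarrow> seq set" where "dom A = fst A"
definition app :: "op \<Rightarrow> seq \<Rightarrow> seq" where "app A = snd A"

definition idop :: op where "idop = (l2, \<lambda>f. f)"

definition comp :: "op \<Rightarrow> op \<Rightarrow> op" where
  "comp A B = ({f \<in> dom B. app B f \<in> dom A}, \<lambda>f. app A (app B f))"

fun opow :: "op \<Rightarrow> nat \<Rightarrow> op" where
  "opow A 0 = idop"
| "opow A (Suc k) = comp A (opow A k)"

definition one_minus :: "op \<Rightarrow> op" where
  "one_minus A = (dom A \<inter> l2, \<lambda>f n. f n - app A f n)"

definition scale_op :: "complex \<Rightarrow> op \<Rightarrow> op" where
  "scale_op a A = (dom A, \<lambda>f n. a * app A f n)"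

definition log_psum :: "op \<Rightarrow> seq \<Rightarrow> nat \<Rightarrow> seq" where
  "log_psum A f K = (\<lambda>n. \<Sum>k=1..K. (1 / of_nat k) * app (opow (one_minus A) k) f n)"

definition log_op :: "op \<Rightarrow> op" where
  "log_op A = ({f \<in> (\<Inter>k. dom (opow A k)). \<exists>x. l2_conv (log_psum A f) x},
              \<lambda>f n. - (THE x. l2_conv (log_psum A f) x) n)"

definition N_op :: op where
  "N_op = ({f \<in> l2. (\<lambda>n. of_nat n * f n) \<in> l2}, \<lambda>f n. of_nat n * f n)"

definition L_op :: op where
  "L_op = (l2, \<lambda>f n. f (Suc n))"

definition polyL :: "complex poly \<Rightarrow> op" where
  "polyL p = (l2, \<lambda>f n. \<Sum>k\<le>degree p. coeff p k * f (n + k))"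

definition comm_on :: "op \<Rightarrow> op \<Rightarrow> (seq \<Rightarrow> seq) \<Rightarrow> seq set \<Rightarrow> bool" where
  "comm_on A B C D \<longleftrightarrow> D \<subseteq> dom (comp A B) \<inter> dom (comp B A) \<and>
     (\<forall>\<phi>\<in>D. (\<lambda>n. app (comp A B) \<phi> n - app (comp B A) \<phi> n) = C \<phi>)"

definition clinhull :: "seq set \<Rightarrow> seq set" where
  "clinhull S = {f. \<exists>m (a::nat \<Rightarrow> complex) v. (\<forall>i<m. v i \<in> S) \<and>
                      f = (\<lambda>n. \<Sum>i<m. a i * v i n)}"

definition csubspace_seq :: "seq set \<Rightarrow> bool" where
  "csubspace_seq D \<longleftrightarrow> (\<lambda>n. 0) \<in> D \<and> (\<forall>f\<in>D. \<forall>g\<in>D. (\<lambda>n. f n + g n) \<in> D) \<and>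
     (\<forall>a. \<forall>f\<in>D. (\<lambda>n. a * f n) \<in> D)"

definition findim_seq :: "seq set \<Rightarrow> bool" where
  "findim_seq D \<longleftrightarrow> (\<exists>B. finite B \<and> D \<subseteq> clinhull B)"

definition kerL :: "complex \<Rightarrow> seq set" where
  "kerL \<alpha> = {f \<in> dom L_op. (\<lambda>n. app L_op f n - \<alpha> * f n) = (\<lambda>n. 0)}"

definition Dpc :: "complex poly \<Rightarrow> complex \<Rightarrow> seq set" where
  "Dpc p c = clinhull {\<phi> \<in> dom N_op. \<exists>\<alpha>. cmod (poly p \<alpha> - 1) < 1 \<and>
       \<alpha> * poly (pderiv p) \<alpha> + c * poly p \<alpha> = 0 \<and> \<phi> \<in> kerL \<alpha>}"

definition Eset :: "complex poly \<Rightarrow> seq set" where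
  "Eset p = {\<phi> \<in> l2. (\<forall>k\<ge>1. \<phi> \<in> dom (comp N_op (opow (one_minus (polyL p)) k))) \<and>
     (\<exists>x. l2_conv (\<lambda>K n. \<Sum>k=1..K. (1 / of_nat k) *
            app (comp N_op (opow (one_minus (polyL p)) k)) \<phi> n) x)}"

end

theory Submission
  imports Defs
begin

text \<open>Write \<open>T = 1 - p(L)\<close>. From \<open>[N, L] = -L\<close> one gets \<open>[N, T^k] = k T^(k-1) L p'(L)\<close>,
  so the commutator of \<open>N\<close> with the partial sum \<open>\<Sum>k=1..K. T^k / k\<close> of \<open>-log p(L)\<close> is
  \<open>\<Sum>k<K. T^k L p'(L)\<close>: the harmonic weights disappear.

  (i) For \<open>|\<alpha>| < 1\<close> the sequence \<open>\<alpha>^n\<close> spans \<open>ker(L - \<alpha>)\<close>, \<open>T\<close> acts on it by \<open>1 - p(\<alpha>)\<close>,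
  and both logarithm series can be summed explicitly; the commutator comes out as
  \<open>-\<alpha> p'(\<alpha>) / p(\<alpha>) = c\<close>. The solutions of \<open>[N, log p(L)] \<phi> = c \<phi>\<close> form a linear space, so
  it contains \<open>D(p,c)\<close>, and rescaling the logarithm by \<open>-i/c\<close> gives the canonical commutation
  relation.

  (ii) Conversely, for such a \<open>\<phi>\<close> and \<open>u = L p'(L) \<phi>\<close> the partial sums \<open>\<Sum>k<K. T^k u\<close> converge
  pointwise to \<open>-c \<phi>\<close>. Applying \<open>p(L) = 1 - T\<close> telescopes them, so \<open>T^K u\<close> converges; since
  \<open>\<Sum>k. T^k u / k\<close> converges as well, that limit is \<open>0\<close>. Hence \<open>(L p'(L) + c p(L)) \<phi> = 0\<close>, a
  linear recurrence with coefficients \<open>(j + c) a\<^sub>j\<close>, which are not all zero unless \<open>p\<close> is a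
  monomial; its solution space is finite-dimensional.\<close>

section \<open>Square-summable sequences\<close>

definition l2_sqnorm :: "seq \<Rightarrow> real" where
  "l2_sqnorm f = (\<Sum>n. (cmod (f n))\<^sup>2)"

lemma cmod_add_square_le: "(cmod (a + b))\<^sup>2 \<le> 2 * (cmod a)\<^sup>2 + 2 * (cmod b)\<^sup>2"
proof -
  have "(cmod (a + b))\<^sup>2 \<le> (cmod a + cmod b)\<^sup>2"
    by (simp add: power_mono norm_triangle_ineq)
  also have "\<dots> \<le> 2 * (cmod a)\<^sup>2 + 2 * (cmod b)\<^sup>2"
    using zero_le_power2[of "cmod a - cmod b"] by (simp add: power2_eq_square algebra_simps)
  finally show ?thesis .
qed

lemma l2_sqnorm_lincomb_bound:
  assumes "f \<in> l2" "g \<in> l2"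
  shows "summable (\<lambda>n. 2 * (cmod a)\<^sup>2 * (cmod (f n))\<^sup>2 + 2 * (cmod (g n))\<^sup>2)"
    and "(cmod (a * f n + g n))\<^sup>2 \<le> 2 * (cmod a)\<^sup>2 * (cmod (f n))\<^sup>2 + 2 * (cmod (g n))\<^sup>2"
  using assms cmod_add_square_le[of "a * f n" "g n"]
  unfolding l2_def by (auto intro: summable_add summable_mult simp: norm_mult power_mult_distrib)

lemma l2_lincomb: "f \<in> l2 \<Longrightarrow> g \<in> l2 \<Longrightarrow> (\<lambda>n. a * f n + g n) \<in> l2"
proof -
  assume f: "f \<in> l2" and g: "g \<in> l2"
  show ?thesis
    unfolding l2_def mem_Collect_eq
    by (rule summable_comparison_test'[OF l2_sqnorm_lincomb_bound(1)[OF f g, where a = a]])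
       (simp add: l2_sqnorm_lincomb_bound(2)[OF f g])
qed

lemma l2_sqnorm_lincomb_le:
  assumes f: "f \<in> l2" and g: "g \<in> l2"
  shows "l2_sqnorm (\<lambda>n. a * f n + g n) \<le> 2 * (cmod a)\<^sup>2 * l2_sqnorm f + 2 * l2_sqnorm g"
proof -
  have "l2_sqnorm (\<lambda>n. a * f n + g n) \<le> (\<Sum>n. 2 * (cmod a)\<^sup>2 * (cmod (f n))\<^sup>2 + 2 * (cmod (g n))\<^sup>2)"
    unfolding l2_sqnorm_def
    using l2_lincomb[OF f g, of a] l2_sqnorm_lincomb_bound[OF f g]
    by (intro suminf_le) (auto simp: l2_def)
  also have "\<dots> = 2 * (cmod a)\<^sup>2 * l2_sqnorm f + 2 * l2_sqnorm g"
    using f g unfolding l2_def l2_sqnorm_def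
    by (subst suminf_add[symmetric]) (auto intro: summable_mult simp: suminf_mult)
  finally show ?thesis .
qed

lemma l2_sqnorm_nonneg: "l2_sqnorm f \<ge> 0" if "f \<in> l2"
  using that unfolding l2_sqnorm_def l2_def by (auto intro: suminf_nonneg)

lemma l2_sqnorm_scale: "f \<in> l2 \<Longrightarrow> l2_sqnorm (\<lambda>n. a * f n) = (cmod a)\<^sup>2 * l2_sqnorm f"
  unfolding l2_sqnorm_def l2_def by (simp add: norm_mult power_mult_distrib suminf_mult)

lemma l2_zero: "(\<lambda>n. 0) \<in> l2"
  unfolding l2_def by simp

lemma l2_scale: "f \<in> l2 \<Longrightarrow> (\<lambda>n. a * f n) \<in> l2"
  using l2_lincomb[OF _ l2_zero, of f a] by simp

lemma l2_diff: "f \<in> l2 \<Longrightarrow> g \<in> l2 \<Longrightarrow> (\<lambda>n. f n - g n) \<in> l2"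
  using l2_lincomb[of g f "-1"] by simp

lemma l2_shift: "f \<in> l2 \<Longrightarrow> (\<lambda>n. f (n + j)) \<in> l2"
  unfolding l2_def using summable_iff_shift[of "\<lambda>n. (cmod (f n))\<^sup>2" j] by simp

lemma l2_conv_iff_sqnorm:
  "l2_conv g x \<longleftrightarrow> x \<in> l2 \<and> (\<forall>K. g K \<in> l2) \<and> (\<lambda>K. l2_sqnorm (\<lambda>n. g K n - x n)) \<longlonglongrightarrow> 0"
proof -
  have sqrt_iff: "(\<lambda>K. sqrt (h K)) \<longlonglongrightarrow> 0 \<longleftrightarrow> h \<longlonglongrightarrow> 0" if "\<And>K. h K \<ge> 0" for h :: "nat \<Rightarrow> real"
  proof
    assume "(\<lambda>K. sqrt (h K)) \<longlonglongrightarrow> 0"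
    from tendsto_power[OF this, of 2] show "h \<longlonglongrightarrow> 0" using that by simp
  qed (use tendsto_real_sqrt in fastforce)
  show ?thesis
    unfolding l2_conv_def l2norm_def l2_sqnorm_def[symmetric]
    using sqrt_iff[of "\<lambda>K. l2_sqnorm (\<lambda>n. g K n - x n)"] l2_sqnorm_nonneg l2_diff by blast
qed

lemma l2_conv_lincomb:
  assumes "l2_conv g x" "l2_conv h y"
  shows "l2_conv (\<lambda>K n. a * g K n + h K n) (\<lambda>n. a * x n + y n)"
proof -
  have x: "x \<in> l2" and g: "\<And>K. g K \<in> l2" and gx: "(\<lambda>K. l2_sqnorm (\<lambda>n. g K n - x n)) \<longlonglongrightarrow> 0"
    and y: "y \<in> l2" and h: "\<And>K. h K \<in> l2" and hy: "(\<lambda>K. l2_sqnorm (\<lambda>n. h K n - y n)) \<longlonglongrightarrow> 0"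
    using assms unfolding l2_conv_iff_sqnorm by auto
  have diff: "(\<lambda>n. a * g K n + h K n - (a * x n + y n)) = (\<lambda>n. a * (g K n - x n) + (h K n - y n))" for K
    by (auto simp: algebra_simps)
  have le: "l2_sqnorm (\<lambda>n. a * g K n + h K n - (a * x n + y n))
      \<le> 2 * (cmod a)\<^sup>2 * l2_sqnorm (\<lambda>n. g K n - x n) + 2 * l2_sqnorm (\<lambda>n. h K n - y n)" for K
    unfolding diff by (rule l2_sqnorm_lincomb_le[OF l2_diff[OF g x] l2_diff[OF h y]])
  have nonneg: "0 \<le> l2_sqnorm (\<lambda>n. a * g K n + h K n - (a * x n + y n))" for K
    by (intro l2_sqnorm_nonneg l2_diff l2_lincomb g h x y)
  have bound: "(\<lambda>K. 2 * (cmod a)\<^sup>2 * l2_sqnorm (\<lambda>n. g K n - x n) + 2 * l2_sqnorm (\<lambda>n. h K n - y n))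
      \<longlonglongrightarrow> 0"
    using tendsto_add[OF tendsto_mult_right_zero[OF gx] tendsto_mult_right_zero[OF hy]] by simp
  have "(\<lambda>K. l2_sqnorm (\<lambda>n. a * g K n + h K n - (a * x n + y n))) \<longlonglongrightarrow> 0"
    by (rule tendsto_sandwich[OF _ _ tendsto_const bound])
       (use le nonneg in auto)
  then show ?thesis
    unfolding l2_conv_iff_sqnorm by (simp add: l2_lincomb g h x y)
qed

lemma l2_conv_scaled:
  assumes f: "f \<in> l2" and s: "s \<longlonglongrightarrow> a"
  shows "l2_conv (\<lambda>K n. s K * f n) (\<lambda>n. a * f n)"
proof -
  have diff: "(\<lambda>n. s K * f n - a * f n) = (\<lambda>n. (s K - a) * f n)" for K
    by (auto simp: algebra_simps)
  have "(\<lambda>K. s K - a) \<longlonglongrightarrow> 0"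
    using s by (simp add: LIM_zero)
  then have "(\<lambda>K. (cmod (s K - a))\<^sup>2 * l2_sqnorm f) \<longlonglongrightarrow> 0\<^sup>2 * l2_sqnorm f"
    by (intro tendsto_intros) (simp add: tendsto_norm_zero)
  then show ?thesis
    unfolding l2_conv_iff_sqnorm diff using l2_scale[OF f] by (simp add: l2_sqnorm_scale[OF f])
qed

lemma l2_conv_pointwise:
  assumes "l2_conv g x"
  shows "(\<lambda>K. g K n) \<longlonglongrightarrow> x n"
proof -
  have x: "x \<in> l2" and g: "\<And>K. g K \<in> l2" and gx: "(\<lambda>K. l2_sqnorm (\<lambda>n. g K n - x n)) \<longlonglongrightarrow> 0"
    using assms unfolding l2_conv_iff_sqnorm by auto
  have le: "(cmod (g K n - x n))\<^sup>2 \<le> l2_sqnorm (\<lambda>n. g K n - x n)" for K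
  proof -
    have "summable (\<lambda>m. (cmod (g K m - x m))\<^sup>2)"
      using l2_diff[OF g x] unfolding l2_def by simp
    from sum_le_suminf[OF this, of "{n}"] show ?thesis
      unfolding l2_sqnorm_def by simp
  qed
  have "(\<lambda>K. (cmod (g K n - x n))\<^sup>2) \<longlonglongrightarrow> 0"
    by (rule tendsto_sandwich[OF _ _ tendsto_const gx]) (use le in auto)
  then have "(\<lambda>K. sqrt ((cmod (g K n - x n))\<^sup>2)) \<longlonglongrightarrow> sqrt 0"
    by (rule tendsto_real_sqrt)
  then show ?thesis
    by (simp add: tendsto_norm_zero_iff LIM_zero_iff)
qed

lemma the_l2_conv_limit: "l2_conv g x \<Longrightarrow> (THE x. l2_conv g x) = x"
proof (rule the_equality)
  show "y = x" if "l2_conv g x" "l2_conv g y" for y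
  proof
    show "y n = x n" for n
      using l2_conv_pointwise[OF that(1), of n] l2_conv_pointwise[OF that(2), of n]
      by (rule LIMSEQ_unique[rotated])
  qed
qed

section \<open>Polynomials in the shift\<close>

definition shift_sum :: "(nat \<Rightarrow> complex) \<Rightarrow> nat \<Rightarrow> seq \<Rightarrow> seq" where
  "shift_sum a D f = (\<lambda>n. \<Sum>j\<le>D. a j * f (n + j))"

definition one_minus_pL :: "complex poly \<Rightarrow> seq \<Rightarrow> seq" where
  "one_minus_pL p f = (\<lambda>n. f n - shift_sum (coeff p) (degree p) f n)"

definition L_pderiv_L :: "complex poly \<Rightarrow> seq \<Rightarrow> seq" where
  "L_pderiv_L p = shift_sum (\<lambda>j. of_nat j * coeff p j) (degree p)"

definition num_mult :: "seq \<Rightarrow> seq" where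
  "num_mult f = (\<lambda>n. of_nat n * f n)"

lemma app_polyL: "app (polyL p) = shift_sum (coeff p) (degree p)"
  unfolding app_def polyL_def shift_sum_def by auto

lemma app_one_minus_polyL: "app (one_minus (polyL p)) = one_minus_pL p"
  unfolding app_def one_minus_def polyL_def one_minus_pL_def shift_sum_def by auto

lemma app_N_op: "app N_op = num_mult"
  unfolding app_def N_op_def num_mult_def by auto

lemma dom_N_op: "dom N_op = {f \<in> l2. num_mult f \<in> l2}"
  unfolding dom_def N_op_def num_mult_def by auto

lemma app_comp: "app (comp A B) f = app A (app B f)"
  unfolding app_def comp_def by auto

lemma dom_comp: "dom (comp A B) = {f \<in> dom B. app B f \<in> dom A}"
  unfolding dom_def comp_def by auto

lemma app_idop: "app idop f = f"
  unfolding app_def idop_def by simp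

lemma dom_idop: "dom idop = l2"
  unfolding dom_def idop_def by simp

lemma dom_polyL: "dom (polyL p) = l2"
  unfolding dom_def polyL_def by simp

lemma app_opow: "app (opow B k) f = (app B ^^ k) f"
  by (induction k) (auto simp: app_comp app_idop)

lemma app_scale_op: "app (scale_op a A) f = (\<lambda>n. a * app A f n)"
  unfolding app_def scale_op_def by auto

lemma dom_scale_op: "dom (scale_op a A) = dom A"
  unfolding dom_def scale_op_def by auto

lemma shift_sum_l2: "f \<in> l2 \<Longrightarrow> shift_sum a D f \<in> l2"
proof (induction D)
  case 0
  then show ?case
    unfolding shift_sum_def using l2_scale[OF l2_shift[OF 0, of 0], of "a 0"] by simp
next
  case (Suc D)
  have "shift_sum a (Suc D) f = (\<lambda>n. a (Suc D) * f (n + Suc D) + shift_sum a D f n)"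
    unfolding shift_sum_def by (auto simp: add.commute)
  moreover have "(\<lambda>n. a (Suc D) * f (n + Suc D) + shift_sum a D f n) \<in> l2"
    by (rule l2_lincomb[OF l2_shift[OF Suc.prems] Suc.IH[OF Suc.prems]])
  ultimately show ?case by simp
qed

lemma dom_opow_polyL: "dom (opow (polyL p) k) = l2"
proof -
  have "dom (opow (polyL p) k) = l2 \<and> (\<forall>f\<in>l2. app (opow (polyL p) k) f \<in> l2)"
    by (induction k)
       (auto simp: dom_idop app_idop dom_comp app_comp dom_polyL app_polyL shift_sum_l2)
  then show ?thesis ..
qed

lemma shift_sum_lincomb: "shift_sum a D (\<lambda>n. x * f n + g n) = (\<lambda>n. x * shift_sum a D f n + shift_sum a D g n)"
  unfolding shift_sum_def by (auto simp: algebra_simps sum.distrib sum_distrib_left)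

lemma shift_sum_diff: "shift_sum a D (\<lambda>n. f n - g n) = (\<lambda>n. shift_sum a D f n - shift_sum a D g n)"
  unfolding shift_sum_def by (auto simp: algebra_simps sum_subtractf)

lemma shift_sum_sum:
  "shift_sum a D (\<lambda>n. \<Sum>k\<in>I. c k * g k n) = (\<lambda>n. \<Sum>k\<in>I. c k * shift_sum a D (g k) n)"
  unfolding shift_sum_def by (auto simp: sum_distrib_left sum.swap[of _ I] ac_simps)

lemma shift_sum_commute: "shift_sum a D (shift_sum b E f) = shift_sum b E (shift_sum a D f)"
  unfolding shift_sum_def
  by (auto simp: sum_distrib_left sum.swap[of _ "{..D}"] ac_simps)

lemma one_minus_pL_lincomb:
  "one_minus_pL p (\<lambda>n. x * f n + g n) = (\<lambda>n. x * one_minus_pL p f n + one_minus_pL p g n)"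
  unfolding one_minus_pL_def shift_sum_lincomb by (auto simp: algebra_simps)

lemma one_minus_pL_scale: "one_minus_pL p (\<lambda>n. x * f n) = (\<lambda>n. x * one_minus_pL p f n)"
  using one_minus_pL_lincomb[of p x f "\<lambda>n. 0"] by (simp add: one_minus_pL_def shift_sum_def)

lemma one_minus_pL_pow_lincomb:
  "(one_minus_pL p ^^ k) (\<lambda>n. x * f n + g n) = (\<lambda>n. x * (one_minus_pL p ^^ k) f n + (one_minus_pL p ^^ k) g n)"
  by (induction k) (auto simp: one_minus_pL_lincomb)

lemma L_pderiv_L_one_minus_pL: "L_pderiv_L p (one_minus_pL p f) = one_minus_pL p (L_pderiv_L p f)"
  unfolding one_minus_pL_def L_pderiv_L_def shift_sum_diff shift_sum_commute ..

lemma L_pderiv_L_one_minus_pL_pow: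
  "L_pderiv_L p ((one_minus_pL p ^^ k) f) = (one_minus_pL p ^^ k) (L_pderiv_L p f)"
  by (induction k) (auto simp: L_pderiv_L_one_minus_pL)

lemma num_mult_one_minus_pL:
  "num_mult (one_minus_pL p f) = (\<lambda>n. one_minus_pL p (num_mult f) n + L_pderiv_L p f n)"
  unfolding num_mult_def one_minus_pL_def L_pderiv_L_def shift_sum_def
  by (auto simp: algebra_simps sum_distrib_left sum_subtractf[symmetric] sum.distrib intro!: sum.cong)

lemma num_mult_one_minus_pL_pow:
  "num_mult ((one_minus_pL p ^^ Suc k) f)
     = (\<lambda>n. (one_minus_pL p ^^ Suc k) (num_mult f) n + of_nat (Suc k) * (one_minus_pL p ^^ k) (L_pderiv_L p f) n)"
proof (induction k)
  case 0
  then show ?case using num_mult_one_minus_pL by simp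
next
  case (Suc k)
  let ?T = "one_minus_pL p"
  have "num_mult ((?T ^^ Suc (Suc k)) f) = (\<lambda>n. ?T (num_mult ((?T ^^ Suc k) f)) n + L_pderiv_L p ((?T ^^ Suc k) f) n)"
    using num_mult_one_minus_pL by simp
  also have "num_mult ((?T ^^ Suc k) f) = (\<lambda>n. of_nat (Suc k) * (?T ^^ k) (L_pderiv_L p f) n + (?T ^^ Suc k) (num_mult f) n)"
    using Suc.IH by (auto simp: add.commute)
  also have "?T \<dots> = (\<lambda>n. of_nat (Suc k) * (?T ^^ Suc k) (L_pderiv_L p f) n + (?T ^^ Suc (Suc k)) (num_mult f) n)"
    by (simp add: one_minus_pL_lincomb)
  finally show ?case
    by (simp add: L_pderiv_L_one_minus_pL L_pderiv_L_one_minus_pL_pow algebra_simps)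
qed

section \<open>The logarithm series and its commutator with \<open>N\<close>\<close>

lemma sum_atLeast1_atMost_eq_lessThan: "(\<Sum>k=1..K. g k) = (\<Sum>k<K. g (Suc k))"
  using sum.atLeast1_atMost_eq[of g K] by (simp add: One_nat_def)

lemma log_psum_polyL:
  "log_psum (polyL p) f K = (\<lambda>n. \<Sum>k=1..K. 1 / of_nat k * (one_minus_pL p ^^ k) f n)"
  unfolding log_psum_def app_opow app_one_minus_polyL ..

lemma dom_log_op_polyL: "dom (log_op (polyL p)) = {f \<in> l2. \<exists>x. l2_conv (log_psum (polyL p) f) x}"
  unfolding dom_def[of "log_op _"] log_op_def using dom_opow_polyL[of p] by (auto simp: dom_def)

lemma app_log_op: "l2_conv (log_psum A f) x \<Longrightarrow> app (log_op A) f = (\<lambda>n. - x n)"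
  by (simp add: app_def log_op_def the_l2_conv_limit)

definition comm_eigenspace :: "op \<Rightarrow> op \<Rightarrow> complex \<Rightarrow> seq set" where
  "comm_eigenspace A B c = {\<phi> \<in> dom (comp A B) \<inter> dom (comp B A).
     (\<lambda>n. app (comp A B) \<phi> n - app (comp B A) \<phi> n) = (\<lambda>n. c * \<phi> n)}"

lemma comm_on_iff_subset_comm_eigenspace:
  "comm_on A B (\<lambda>\<phi> n. c * \<phi> n) D \<longleftrightarrow> D \<subseteq> comm_eigenspace A B c"
  unfolding comm_on_def comm_eigenspace_def by blast

lemma comm_eigenspace_N_op_scale:
  assumes "\<phi> \<in> comm_eigenspace N_op B c"
  shows "\<phi> \<in> comm_eigenspace N_op (scale_op a B) (a * c)"
proof -
  have "num_mult (\<lambda>n. a * app B \<phi> n) = (\<lambda>n. a * num_mult (app B \<phi>) n)"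
    by (simp add: num_mult_def algebra_simps)
  moreover have "\<phi> \<in> dom B" "app B \<phi> \<in> l2" "num_mult (app B \<phi>) \<in> l2" "\<phi> \<in> dom (comp B N_op)"
    and comm: "\<And>n. num_mult (app B \<phi>) n - app B (num_mult \<phi>) n = c * \<phi> n"
    using assms unfolding comm_eigenspace_def dom_comp dom_N_op app_comp app_N_op
    by (auto dest: fun_cong)
  ultimately show ?thesis
    unfolding comm_eigenspace_def dom_comp dom_N_op app_comp app_N_op app_scale_op dom_scale_op
    by (auto simp: l2_scale right_diff_distrib[symmetric] comm)
qed

lemma num_mult_lincomb: "num_mult (\<lambda>n. a * f n + g n) = (\<lambda>n. a * num_mult f n + num_mult g n)"
  unfolding num_mult_def by (auto simp: algebra_simps)

lemma log_psum_polyL_lincomb: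
  "log_psum (polyL p) (\<lambda>n. a * f n + g n) K = (\<lambda>n. a * log_psum (polyL p) f K n + log_psum (polyL p) g K n)"
  unfolding log_psum_polyL one_minus_pL_pow_lincomb
  by (auto simp: algebra_simps sum.distrib sum_distrib_left)

lemma mem_comm_eigenspace_N_log_iff:
  "\<phi> \<in> comm_eigenspace N_op (log_op (polyL p)) c \<longleftrightarrow>
     \<phi> \<in> l2 \<and> num_mult \<phi> \<in> l2 \<and>
     (\<exists>x y. l2_conv (log_psum (polyL p) \<phi>) x \<and> l2_conv (log_psum (polyL p) (num_mult \<phi>)) y \<and>
        num_mult x \<in> l2 \<and> (\<forall>n. of_nat n * x n - y n = - c * \<phi> n))"
  (is "_ \<longleftrightarrow> ?rhs")
proof -
  let ?Log = "log_op (polyL p)"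
  have conv_l2: "l2_conv g x \<Longrightarrow> x \<in> l2" for g x
    unfolding l2_conv_def by blast
  have neg_l2: "(\<lambda>n. - x n) \<in> l2" if "x \<in> l2" for x
    using l2_scale[OF that, of "-1"] by simp
  have num_mult_uminus: "num_mult (\<lambda>n. - x n) = (\<lambda>n. - num_mult x n)" for x
    by (simp add: num_mult_def)
  have commutator: "app (comp N_op ?Log) \<phi> n - app (comp ?Log N_op) \<phi> n = - (of_nat n * x n - y n)"
    if "l2_conv (log_psum (polyL p) \<phi>) x" "l2_conv (log_psum (polyL p) (num_mult \<phi>)) y" for x y n
    unfolding app_comp app_N_op app_log_op[OF that(1)] app_log_op[OF that(2)]
    by (simp add: num_mult_def)
  show ?thesis
  proof
    assume \<phi>: "\<phi> \<in> comm_eigenspace N_op ?Log c"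
    then obtain x y where x: "l2_conv (log_psum (polyL p) \<phi>) x"
      and y: "l2_conv (log_psum (polyL p) (num_mult \<phi>)) y"
      and l2: "\<phi> \<in> l2" "num_mult \<phi> \<in> l2" "num_mult (\<lambda>n. - x n) \<in> l2"
      unfolding comm_eigenspace_def dom_comp dom_log_op_polyL dom_N_op app_N_op
      by (auto simp: app_log_op)
    have "num_mult x \<in> l2"
      using neg_l2[OF l2(3)] by (simp add: num_mult_def)
    moreover have "of_nat n * x n - y n = - c * \<phi> n" for n
      using fun_cong[OF \<phi>[unfolded comm_eigenspace_def, THEN CollectD, THEN conjunct2], of n]
      unfolding commutator[OF x y] by (simp add: algebra_simps)
    ultimately show ?rhs
      using x y l2 by blast
  next
    assume ?rhs
    then obtain x y where x: "l2_conv (log_psum (polyL p) \<phi>) x"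
      and y: "l2_conv (log_psum (polyL p) (num_mult \<phi>)) y"
      and l2: "\<phi> \<in> l2" "num_mult \<phi> \<in> l2" "num_mult x \<in> l2"
      and rel: "\<And>n. of_nat n * x n - y n = - c * \<phi> n"
      by blast
    have "\<phi> \<in> dom (comp N_op ?Log)"
      unfolding dom_comp dom_log_op_polyL dom_N_op
      using x l2 neg_l2[OF conv_l2[OF x]] neg_l2[OF l2(3)] by (auto simp: app_log_op[OF x] num_mult_uminus)
    moreover have "\<phi> \<in> dom (comp ?Log N_op)"
      unfolding dom_comp dom_log_op_polyL dom_N_op app_N_op using y l2 by blast
    moreover have "(\<lambda>n. app (comp N_op ?Log) \<phi> n - app (comp ?Log N_op) \<phi> n) = (\<lambda>n. c * \<phi> n)"
      unfolding commutator[OF x y] rel by simp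
    ultimately show "\<phi> \<in> comm_eigenspace N_op ?Log c"
      unfolding comm_eigenspace_def by blast
  qed
qed

lemma log_psum_commutator:
  "of_nat n * log_psum (polyL p) f K n - log_psum (polyL p) (num_mult f) K n
     = (\<Sum>k<K. (one_minus_pL p ^^ k) (L_pderiv_L p f) n)"
proof -
  let ?T = "one_minus_pL p"
  have "of_nat n * log_psum (polyL p) f K n - log_psum (polyL p) (num_mult f) K n
      = (\<Sum>k<K. 1 / of_nat (Suc k) * (num_mult ((?T ^^ Suc k) f) n - (?T ^^ Suc k) (num_mult f) n))"
    unfolding log_psum_polyL sum_atLeast1_atMost_eq_lessThan num_mult_def
    by (simp add: sum_distrib_left sum_subtractf algebra_simps)
  also have "\<dots> = (\<Sum>k<K. (?T ^^ k) (L_pderiv_L p f) n)"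
    unfolding num_mult_one_minus_pL_pow by (simp del: of_nat_Suc)
  finally show ?thesis .
qed

lemma polyL_geometric_partial_sum:
  "shift_sum (coeff p) (degree p) (\<lambda>n. \<Sum>k<K. (one_minus_pL p ^^ k) u n) = (\<lambda>n. u n - (one_minus_pL p ^^ K) u n)"
proof (induction K)
  case 0
  then show ?case by (simp add: shift_sum_def)
next
  case (Suc K)
  have "(\<lambda>n. \<Sum>k<Suc K. (one_minus_pL p ^^ k) u n) = (\<lambda>n. 1 * (one_minus_pL p ^^ K) u n + (\<Sum>k<K. (one_minus_pL p ^^ k) u n))"
    by (simp add: add.commute)
  then have "shift_sum (coeff p) (degree p) (\<lambda>n. \<Sum>k<Suc K. (one_minus_pL p ^^ k) u n)
      = (\<lambda>n. shift_sum (coeff p) (degree p) ((one_minus_pL p ^^ K) u) n + (u n - (one_minus_pL p ^^ K) u n))"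
    by (simp only: shift_sum_lincomb Suc.IH) simp
  also have "\<dots> = (\<lambda>n. u n - (one_minus_pL p ^^ Suc K) u n)"
    by (simp add: one_minus_pL_def[of p "(one_minus_pL p ^^ K) u"] algebra_simps)
  finally show ?case .
qed

lemma harmonic_weighted_convergent_imp_limit_zero:
  fixes u :: "nat \<Rightarrow> complex"
  assumes u: "u \<longlonglongrightarrow> z" and conv: "convergent (\<lambda>K. \<Sum>k=1..K. 1 / of_nat k * u k)"
  shows "z = 0"
proof (rule ccontr)
  assume z: "z \<noteq> 0"
  have "summable (\<lambda>k. 1 / of_nat (Suc k) * u (Suc k))"
    using conv unfolding sum_atLeast1_atMost_eq_lessThan by (simp only: summable_iff_convergent)
  then have summable_Re: "summable (\<lambda>k. Re (cnj z * (1 / of_nat (Suc k) * u (Suc k))))"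
    by (intro summable_Re summable_mult)
  have "(\<lambda>k. Re (cnj z * u (Suc k))) \<longlonglongrightarrow> Re (cnj z * z)"
    using LIMSEQ_Suc[OF u] by (intro tendsto_intros)
  moreover have "Re (cnj z * z) = (cmod z)\<^sup>2"
    using cmod_power2[of z] by (simp add: power2_eq_square)
  then have "Re (cnj z * z) > (cmod z)\<^sup>2 / 2"
    using z by simp
  ultimately have "eventually (\<lambda>k. Re (cnj z * u (Suc k)) > (cmod z)\<^sup>2 / 2) sequentially"
    by (rule order_tendstoD)
  then obtain N where N: "\<And>k. k \<ge> N \<Longrightarrow> Re (cnj z * u (Suc k)) > (cmod z)\<^sup>2 / 2"
    unfolding eventually_at_top_linorder by blast
  \<comment> \<open>Eventually the terms dominate a multiple of the harmonic series.\<close>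
  have "summable (\<lambda>k. (cmod z)\<^sup>2 / 2 * (1 / real (Suc k)))"
  proof (rule summable_comparison_test'[OF summable_Re, of N])
    fix k assume "k \<ge> N"
    have "(cmod z)\<^sup>2 / 2 * (1 / real (Suc k)) \<le> Re (cnj z * u (Suc k)) * (1 / real (Suc k))"
      using N[OF \<open>k \<ge> N\<close>] by (intro mult_right_mono) auto
    then show "norm ((cmod z)\<^sup>2 / 2 * (1 / real (Suc k))) \<le> Re (cnj z * (1 / of_nat (Suc k) * u (Suc k)))"
      by (simp add: Re_divide_of_nat)
  qed
  then have "summable (\<lambda>k. 2 / (cmod z)\<^sup>2 * ((cmod z)\<^sup>2 / 2 * (1 / real (Suc k))))"
    by (rule summable_mult)
  moreover have "(\<lambda>k. 2 / (cmod z)\<^sup>2 * ((cmod z)\<^sup>2 / 2 * (1 / real (Suc k)))) = (\<lambda>k. inverse (real (Suc k)))"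
    using z by (auto simp: field_simps)
  ultimately have "summable (\<lambda>k. inverse (real (Suc k)))"
    by simp
  then show False
    using summable_Suc_iff[of "\<lambda>k. inverse (real k)"] not_summable_harmonic[where 'a = real] by simp
qed

lemma comm_eigenspace_N_log_recurrence:
  assumes "\<phi> \<in> comm_eigenspace N_op (log_op (polyL p)) c"
  shows "(\<Sum>j\<le>degree p. (of_nat j + c) * coeff p j * \<phi> (n + j)) = 0"
proof -
  obtain x y where x: "l2_conv (log_psum (polyL p) \<phi>) x"
    and y: "l2_conv (log_psum (polyL p) (num_mult \<phi>)) y"
    and rel: "\<And>n. of_nat n * x n - y n = - c * \<phi> n"
    using assms unfolding mem_comm_eigenspace_N_log_iff by blast
  let ?T = "one_minus_pL p"
  define u where "u = L_pderiv_L p \<phi>"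
  have partial_sums: "(\<lambda>K. \<Sum>k<K. (?T ^^ k) u m) \<longlonglongrightarrow> - c * \<phi> m" for m
  proof -
    have "(\<lambda>K. of_nat m * log_psum (polyL p) \<phi> K m - log_psum (polyL p) (num_mult \<phi>) K m)
        \<longlonglongrightarrow> of_nat m * x m - y m"
      by (intro tendsto_intros l2_conv_pointwise x y)
    then show ?thesis
      unfolding log_psum_commutator rel u_def .
  qed
  have "(\<lambda>K. shift_sum (coeff p) (degree p) (\<lambda>m. \<Sum>k<K. (?T ^^ k) u m) n)
      \<longlonglongrightarrow> (\<Sum>j\<le>degree p. coeff p j * (- c * \<phi> (n + j)))"
    unfolding shift_sum_def by (intro tendsto_intros partial_sums)
  then have "(\<lambda>K. u n - (u n - (?T ^^ K) u n))
      \<longlonglongrightarrow> u n - (\<Sum>j\<le>degree p. coeff p j * (- c * \<phi> (n + j)))"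
    unfolding polyL_geometric_partial_sum by (intro tendsto_intros)
  then have remainder: "(\<lambda>K. (?T ^^ K) u n) \<longlonglongrightarrow> u n + c * (\<Sum>j\<le>degree p. coeff p j * \<phi> (n + j))"
    by (simp add: sum_distrib_left sum_negf mult.left_commute)
  have "(\<lambda>K. L_pderiv_L p (log_psum (polyL p) \<phi> K) n) \<longlonglongrightarrow> L_pderiv_L p x n"
    unfolding L_pderiv_L_def shift_sum_def by (intro tendsto_intros l2_conv_pointwise x)
  moreover have "L_pderiv_L p (log_psum (polyL p) \<phi> K) n = (\<Sum>k=1..K. 1 / of_nat k * (?T ^^ k) u n)" for K
    unfolding log_psum_polyL L_pderiv_L_def shift_sum_sum
    by (simp add: L_pderiv_L_def[symmetric] L_pderiv_L_one_minus_pL_pow u_def)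
  ultimately have "convergent (\<lambda>K. \<Sum>k=1..K. 1 / of_nat k * (?T ^^ k) u n)"
    by (auto simp: convergent_def)
  from harmonic_weighted_convergent_imp_limit_zero[OF remainder this]
  show ?thesis
    unfolding u_def L_pderiv_L_def shift_sum_def
    by (simp add: sum_distrib_left algebra_simps sum.distrib)
qed

section \<open>Solutions of the commutation relation satisfy a linear recurrence\<close>

function recurrence_basis :: "(nat \<Rightarrow> complex) \<Rightarrow> nat \<Rightarrow> nat \<Rightarrow> nat \<Rightarrow> complex" where
  "recurrence_basis q d i n =
     (if n < d then (if n = i then 1 else 0)
      else - (\<Sum>k<d. q k * recurrence_basis q d i (n - d + k)) / q d)"
  by auto
termination by (relation "Wellfounded.measure (\<lambda>(q, d, i, n). n)") auto

declare recurrence_basis.simps[simp del]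

lemma recurrence_solution_expansion:
  assumes qd: "q d \<noteq> 0" and rec: "\<And>n. (\<Sum>k\<le>d. q k * f (n + k)) = 0"
  shows "f n = (\<Sum>i<d. f i * recurrence_basis q d i n)"
proof (induction n rule: less_induct)
  case (less n)
  show ?case
  proof (cases "n < d")
    case True
    then have "(\<Sum>i<d. f i * recurrence_basis q d i n) = (\<Sum>i<d. if i = n then f n else 0)"
      by (intro sum.cong) (auto simp: recurrence_basis.simps)
    with True show ?thesis by simp
  next
    case False
    define m where "m = n - d"
    have n: "n = m + d"
      using False m_def by simp
    have "q d * f n + (\<Sum>k<d. q k * f (m + k)) = 0"
      using rec[of m] by (simp add: lessThan_Suc_atMost[symmetric] n add.commute)
    then have "f n = - (\<Sum>k<d. q k * f (m + k)) / q d"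
      using qd by (simp add: field_simps add_eq_0_iff)
    also have "(\<Sum>k<d. q k * f (m + k)) = (\<Sum>k<d. q k * (\<Sum>i<d. f i * recurrence_basis q d i (m + k)))"
      using less.IH n by (intro sum.cong) auto
    also have "\<dots> = (\<Sum>i<d. f i * (\<Sum>k<d. q k * recurrence_basis q d i (m + k)))"
      unfolding sum_distrib_left by (subst sum.swap) (simp add: ac_simps)
    also have "- \<dots> / q d = (\<Sum>i<d. - (f i * (\<Sum>k<d. q k * recurrence_basis q d i (m + k))) / q d)"
      by (simp add: sum_divide_distrib sum_negf)
    also have "\<dots> = (\<Sum>i<d. f i * recurrence_basis q d i n)"
    proof (intro sum.cong refl)
      fix i
      have "recurrence_basis q d i n = - (\<Sum>k<d. q k * recurrence_basis q d i (n - d + k)) / q d"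
        using False by (subst recurrence_basis.simps) simp
      then show "- (f i * (\<Sum>k<d. q k * recurrence_basis q d i (m + k))) / q d = f i * recurrence_basis q d i n"
        by (simp add: m_def)
    qed
    finally show ?thesis .
  qed
qed

lemma findim_recurrence_solutions:
  assumes "\<exists>j\<le>D. q j \<noteq> 0"
  shows "findim_seq {f. \<forall>n. (\<Sum>j\<le>D. q j * f (n + j)) = 0}"
proof -
  define S where "S = {j. j \<le> D \<and> q j \<noteq> 0}"
  define d where "d = Max S"
  have "finite S" "S \<noteq> {}"
    using assms unfolding S_def by auto
  then have "d \<in> S" and above_d: "\<And>j. j \<in> S \<Longrightarrow> j \<le> d"
    unfolding d_def by auto
  then have qd: "q d \<noteq> 0" and "d \<le> D"
    unfolding S_def by auto
  have "f \<in> clinhull (recurrence_basis q d ` {..<d})" if rec: "\<And>n. (\<Sum>j\<le>D. q j * f (n + j)) = 0" for f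
  proof -
    have "(\<Sum>j\<le>d. q j * f (n + j)) = (\<Sum>j\<le>D. q j * f (n + j))" for n
    proof (rule sum.mono_neutral_left)
      show "\<forall>j\<in>{..D} - {..d}. q j * f (n + j) = 0"
        using above_d unfolding S_def by force
    qed (use \<open>d \<le> D\<close> in auto)
    then have "\<And>n. (\<Sum>j\<le>d. q j * f (n + j)) = 0"
      using rec by simp
    then have "f = (\<lambda>n. \<Sum>i<d. f i * recurrence_basis q d i n)"
      using recurrence_solution_expansion[of q d f, OF qd] by blast
    then show ?thesis
      unfolding clinhull_def by blast
  qed
  then show ?thesis
    unfolding findim_seq_def by blast
qed

lemma not_monom_imp_shifted_coeff_nonzero:
  fixes p :: "complex poly"
  assumes "\<nexists>b m. p = monom b m"
  shows "\<exists>j\<le>degree p. (of_nat j + c) * coeff p j \<noteq> 0"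
proof (rule ccontr)
  assume "\<not> ?thesis"
  then have zero: "\<And>j. j \<le> degree p \<Longrightarrow> (of_nat j + c) * coeff p j = 0"
    by auto
  have "coeff p j = 0" if "j \<noteq> degree p" for j
  proof (rule ccontr)
    assume cj: "coeff p j \<noteq> 0"
    then have "j \<le> degree p"
      by (rule le_degree)
    with cj zero[of j] have "of_nat j + c = 0"
      by simp
    moreover from cj have "coeff p (degree p) \<noteq> 0"
      by auto
    with zero[of "degree p"] have "of_nat (degree p) + c = 0"
      by simp
    ultimately have "(of_nat j :: complex) = of_nat (degree p)"
      by (simp add: eq_neg_iff_add_eq_0[symmetric])
    with that show False
      by simp
  qed
  then have "p = monom (coeff p (degree p)) (degree p)"
    by (intro poly_eqI) (auto simp: coeff_monom)
  with assms show False
    by blast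
qed

section \<open>Geometric eigenvectors of the shift\<close>

lemma poly_pderiv_mult_eq_sum:
  fixes p :: "'a::{comm_semiring_1,semiring_no_zero_divisors,semiring_char_0} poly"
  shows "x * poly (pderiv p) x = (\<Sum>j\<le>degree p. of_nat j * coeff p j * x ^ j)"
proof -
  define g where "g j = of_nat j * coeff p j * x ^ j" for j
  have "x * poly (pderiv p) x = x * (\<Sum>i\<le>degree p. coeff (pderiv p) i * x ^ i)"
    unfolding poly_altdef
    by (intro arg_cong[where f = "(*) x"] sum.mono_neutral_left)
       (auto simp: coeff_eq_0 degree_pderiv)
  also have "\<dots> = (\<Sum>i\<le>degree p. g (Suc i))"
    unfolding g_def coeff_pderiv by (simp add: sum_distrib_left ac_simps)
  also have "\<dots> = (\<Sum>j\<le>Suc (degree p). g j)"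
    by (subst sum.atMost_Suc_shift) (simp add: g_def)
  also have "\<dots> = (\<Sum>j\<le>degree p. g j)"
    by (simp add: g_def coeff_eq_0)
  finally show ?thesis
    unfolding g_def .
qed

lemma geometric_l2: "cmod \<alpha> < 1 \<Longrightarrow> (\<lambda>n. \<alpha> ^ n) \<in> l2"
  unfolding l2_def using summable_geometric[of "(cmod \<alpha>)\<^sup>2"]
  by (simp add: norm_power power_mult[symmetric] mult.commute power_less_one_iff abs_square_less_1)

lemma num_mult_geometric_l2:
  assumes "cmod \<alpha> < 1"
  shows "num_mult (\<lambda>n. \<alpha> ^ n) \<in> l2"
proof -
  define s where "s = sqrt (cmod \<alpha>)"
  have s: "0 \<le> s" "s < 1" "s * s = cmod \<alpha>"
    using assms unfolding s_def by auto
  \<comment> \<open>\<open>|n \<alpha>^n|^2 = (n s^n)^2 |\<alpha>|^n\<close> and \<open>n s^n \<rightarrow> 0\<close>, so the geometric series \<open>|\<alpha>|^n\<close> dominates.\<close>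
  have "(\<lambda>n. of_nat n * s ^ n) \<longlonglongrightarrow> (0::real)"
    using s by (intro powser_times_n_limit_0) auto
  then have "eventually (\<lambda>n. real n * s ^ n < 1) sequentially"
    by (intro order_tendstoD) auto
  then obtain M where M: "\<And>n. n \<ge> M \<Longrightarrow> real n * s ^ n < 1"
    unfolding eventually_at_top_linorder by blast
  show ?thesis
    unfolding l2_def num_mult_def mem_Collect_eq
  proof (rule summable_comparison_test'[OF summable_geometric[of "cmod \<alpha>"], of M])
    fix n assume "n \<ge> M"
    have "(real n * s ^ n)\<^sup>2 \<le> 1"
      using M[OF \<open>n \<ge> M\<close>] s by (simp add: power_le_one abs_le_square_iff)
    then have "(real n * s ^ n)\<^sup>2 * cmod \<alpha> ^ n \<le> cmod \<alpha> ^ n"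
      using mult_right_mono[of _ 1 "cmod \<alpha> ^ n"] by simp
    moreover have "(cmod (of_nat n * \<alpha> ^ n))\<^sup>2 = (real n * s ^ n)\<^sup>2 * cmod \<alpha> ^ n"
      by (simp add: norm_mult norm_power power_mult_distrib s(3)[symmetric] power2_eq_square)
    ultimately show "norm ((cmod (of_nat n * \<alpha> ^ n))\<^sup>2) \<le> cmod \<alpha> ^ n"
      by simp
  qed (use assms in simp)
qed

lemma shift_sum_geometric: "shift_sum (coeff p) (degree p) (\<lambda>n. \<alpha> ^ n) = (\<lambda>n. poly p \<alpha> * \<alpha> ^ n)"
  unfolding shift_sum_def poly_altdef by (simp add: power_add sum_distrib_left ac_simps)

lemma shift_sum_num_mult_geometric:
  "shift_sum (coeff p) (degree p) (num_mult (\<lambda>n. \<alpha> ^ n))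
     = (\<lambda>n. poly p \<alpha> * num_mult (\<lambda>n. \<alpha> ^ n) n + \<alpha> * poly (pderiv p) \<alpha> * \<alpha> ^ n)"
  unfolding poly_pderiv_mult_eq_sum unfolding shift_sum_def poly_altdef num_mult_def
  by (simp add: power_add sum_distrib_left sum_distrib_right sum.distrib algebra_simps)

lemma one_minus_pL_pow_geometric:
  "(one_minus_pL p ^^ k) (\<lambda>n. \<alpha> ^ n) = (\<lambda>n. (1 - poly p \<alpha>) ^ k * \<alpha> ^ n)"
  by (induction k) (simp_all add: one_minus_pL_scale,
      simp add: one_minus_pL_def shift_sum_geometric algebra_simps)

lemma one_minus_pL_pow_num_mult_geometric:
  "(one_minus_pL p ^^ k) (num_mult (\<lambda>n. \<alpha> ^ n)) = (\<lambda>n. (1 - poly p \<alpha>) ^ k * num_mult (\<lambda>n. \<alpha> ^ n) n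
     - of_nat k * (1 - poly p \<alpha>) ^ (k - 1) * (\<alpha> * poly (pderiv p) \<alpha>) * \<alpha> ^ n)"
proof (induction k)
  case 0
  then show ?case by simp
next
  case (Suc k)
  define w where "w = 1 - poly p \<alpha>"
  define \<beta> where "\<beta> = \<alpha> * poly (pderiv p) \<alpha>"
  let ?T = "one_minus_pL p" and ?e = "\<lambda>n. \<alpha> ^ n"
  have T_Ne: "?T (num_mult ?e) = (\<lambda>n. w * num_mult ?e n - \<beta> * \<alpha> ^ n)"
    unfolding one_minus_pL_def shift_sum_num_mult_geometric w_def \<beta>_def by (auto simp: algebra_simps)
  have T_e: "?T ?e = (\<lambda>n. w * \<alpha> ^ n)"
    using one_minus_pL_pow_geometric[where k = 1] unfolding w_def by simp
  have "(?T ^^ Suc k) (num_mult ?e) = ?T (\<lambda>n. w ^ k * num_mult ?e n + (- (of_nat k * w ^ (k - 1) * \<beta>)) * \<alpha> ^ n)"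
    using Suc unfolding w_def \<beta>_def by (simp add: algebra_simps)
  also have "\<dots> = (\<lambda>n. w ^ k * ?T (num_mult ?e) n + (- (of_nat k * w ^ (k - 1) * \<beta>)) * ?T ?e n)"
    by (simp only: one_minus_pL_lincomb one_minus_pL_scale)
  also have "\<dots> = (\<lambda>n. w ^ Suc k * num_mult ?e n - of_nat (Suc k) * w ^ (Suc k - 1) * \<beta> * \<alpha> ^ n)"
    unfolding T_Ne T_e by (cases k) (auto simp: algebra_simps)
  finally show ?case
    unfolding w_def \<beta>_def .
qed

lemma log_psum_polyL_geometric:
  "log_psum (polyL p) (\<lambda>n. \<alpha> ^ n) K = (\<lambda>n. (\<Sum>k=1..K. 1 / of_nat k * (1 - poly p \<alpha>) ^ k) * \<alpha> ^ n)"
  unfolding log_psum_polyL one_minus_pL_pow_geometric by (simp add: sum_distrib_left mult.commute)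

text \<open>The right-hand side is written in the form \<open>a * f n + g n\<close> of \<open>l2_conv_lincomb\<close>.\<close>
lemma log_psum_polyL_num_mult_geometric:
  "log_psum (polyL p) (num_mult (\<lambda>n. \<alpha> ^ n)) K
     = (\<lambda>n. 1 * ((\<Sum>k=1..K. 1 / of_nat k * (1 - poly p \<alpha>) ^ k) * num_mult (\<lambda>n. \<alpha> ^ n) n)
          + (- (\<alpha> * poly (pderiv p) \<alpha>) * (\<Sum>k<K. (1 - poly p \<alpha>) ^ k)) * \<alpha> ^ n)"
proof
  fix n
  define w where "w = 1 - poly p \<alpha>"
  define \<beta> where "\<beta> = \<alpha> * poly (pderiv p) \<alpha>"
  have "log_psum (polyL p) (num_mult (\<lambda>n. \<alpha> ^ n)) K n
      = (\<Sum>k<K. 1 / of_nat (Suc k) * w ^ Suc k * num_mult (\<lambda>n. \<alpha> ^ n) n - w ^ k * \<beta> * \<alpha> ^ n)"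
    unfolding log_psum_polyL one_minus_pL_pow_num_mult_geometric sum_atLeast1_atMost_eq_lessThan
    by (intro sum.cong) (simp_all add: w_def \<beta>_def right_diff_distrib del: of_nat_Suc)
  also have "\<dots> = (\<Sum>k<K. 1 / of_nat (Suc k) * w ^ Suc k) * num_mult (\<lambda>n. \<alpha> ^ n) n - (\<Sum>k<K. w ^ k) * \<beta> * \<alpha> ^ n"
    by (simp only: sum_subtractf sum_distrib_right)
  finally show "log_psum (polyL p) (num_mult (\<lambda>n. \<alpha> ^ n)) K n
      = 1 * ((\<Sum>k=1..K. 1 / of_nat k * (1 - poly p \<alpha>) ^ k) * num_mult (\<lambda>n. \<alpha> ^ n) n)
          + (- (\<alpha> * poly (pderiv p) \<alpha>) * (\<Sum>k<K. (1 - poly p \<alpha>) ^ k)) * \<alpha> ^ n"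
    unfolding sum_atLeast1_atMost_eq_lessThan w_def \<beta>_def by (simp add: algebra_simps)
qed

lemma summable_log_series:
  fixes w :: complex
  assumes "norm w < 1"
  shows "summable (\<lambda>k. 1 / of_nat (Suc k) * w ^ Suc k)"
proof (rule summable_comparison_test'[where N = 0])
  show "summable (\<lambda>k. norm w * norm w ^ k)"
    using assms by (intro summable_mult summable_geometric) simp
  have "norm w ^ Suc k / real (Suc k) \<le> norm w ^ Suc k" for k
    by (rule mult_imp_div_pos_le)
       (use mult_left_mono[of 1 "real (Suc k)" "norm w ^ Suc k"] in \<open>simp_all del: of_nat_Suc\<close>)
  then show "norm (1 / of_nat (Suc k) * w ^ Suc k) \<le> norm w * norm w ^ k" for k
    by (simp add: norm_mult norm_power norm_divide del: of_nat_Suc)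
qed

lemma geometric_in_comm_eigenspace:
  assumes \<alpha>: "cmod \<alpha> < 1" and p\<alpha>: "cmod (poly p \<alpha> - 1) < 1"
    and eq: "\<alpha> * poly (pderiv p) \<alpha> + c * poly p \<alpha> = 0"
  shows "(\<lambda>n. \<alpha> ^ n) \<in> comm_eigenspace N_op (log_op (polyL p)) c"
proof -
  define w where "w = 1 - poly p \<alpha>"
  define \<beta> where "\<beta> = \<alpha> * poly (pderiv p) \<alpha>"
  define e where "e = (\<lambda>n::nat. \<alpha> ^ n)"
  define L where "L = (\<Sum>k. 1 / of_nat (Suc k) * w ^ Suc k)"
  have w: "norm w < 1"
    using p\<alpha> unfolding w_def by (simp add: norm_minus_commute)
  have p\<alpha>_nonzero: "poly p \<alpha> \<noteq> 0"
    using p\<alpha> by auto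
  have e: "e \<in> l2" "num_mult e \<in> l2"
    unfolding e_def using geometric_l2 num_mult_geometric_l2 \<alpha> by auto
  have log_lim: "(\<lambda>K. \<Sum>k=1..K. 1 / of_nat k * w ^ k) \<longlonglongrightarrow> L"
    unfolding sum_atLeast1_atMost_eq_lessThan L_def by (rule summable_LIMSEQ[OF summable_log_series[OF w]])
  have "(\<lambda>K. \<Sum>k<K. w ^ k) \<longlonglongrightarrow> 1 / poly p \<alpha>"
    using geometric_sums[OF w] unfolding sums_def w_def by simp
  then have geom_lim: "(\<lambda>K. - \<beta> * (\<Sum>k<K. w ^ k)) \<longlonglongrightarrow> - \<beta> * (1 / poly p \<alpha>)"
    by (intro tendsto_intros)
  have x: "l2_conv (log_psum (polyL p) e) (\<lambda>n. L * e n)"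
    unfolding e_def log_psum_polyL_geometric w_def[symmetric]
    using l2_conv_scaled[OF e(1) log_lim] unfolding e_def .
  have y: "l2_conv (log_psum (polyL p) (num_mult e))
      (\<lambda>n. 1 * (L * num_mult e n) + (- \<beta> * (1 / poly p \<alpha>)) * e n)"
    unfolding e_def log_psum_polyL_num_mult_geometric w_def[symmetric] \<beta>_def[symmetric]
    using l2_conv_lincomb[OF l2_conv_scaled[OF e(2) log_lim] l2_conv_scaled[OF e(1) geom_lim]]
    unfolding e_def .
  have "num_mult (\<lambda>n. L * e n) \<in> l2"
    using l2_scale[OF e(2), of L] by (simp add: num_mult_def ac_simps)
  moreover have "\<beta> = - c * poly p \<alpha>"
    using eq unfolding \<beta>_def by (simp add: eq_neg_iff_add_eq_0)
  then have "of_nat n * (L * e n) - (1 * (L * num_mult e n) + (- \<beta> * (1 / poly p \<alpha>)) * e n) = - c * e n" for n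
    using p\<alpha>_nonzero by (simp add: num_mult_def algebra_simps)
  ultimately show ?thesis
    unfolding mem_comm_eigenspace_N_log_iff e_def[symmetric] using e x y by blast
qed

lemma one_minus_pL_pow_zero: "(one_minus_pL p ^^ k) (\<lambda>n. 0) = (\<lambda>n. 0)"
  by (induction k) (simp_all add: one_minus_pL_def shift_sum_def)

lemma zero_in_comm_eigenspace_N_log: "(\<lambda>n. 0) \<in> comm_eigenspace N_op (log_op (polyL p)) c"
proof -
  have "log_psum (polyL p) (\<lambda>n. 0) = (\<lambda>K n. 0 * 0)"
    unfolding log_psum_polyL one_minus_pL_pow_zero by simp
  moreover have "l2_conv (\<lambda>K n. 0 * 0) (\<lambda>n. 0 * 0)"
    using l2_conv_scaled[OF l2_zero, of "\<lambda>K. 0" 0] by simp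
  moreover have "num_mult (\<lambda>n. 0) = (\<lambda>n. 0)"
    unfolding num_mult_def by simp
  ultimately show ?thesis
    unfolding mem_comm_eigenspace_N_log_iff using l2_zero by (auto intro!: exI[of _ "\<lambda>n. 0"])
qed

lemma comm_eigenspace_N_log_lincomb:
  assumes "\<phi> \<in> comm_eigenspace N_op (log_op (polyL p)) c" "\<psi> \<in> comm_eigenspace N_op (log_op (polyL p)) c"
  shows "(\<lambda>n. a * \<phi> n + \<psi> n) \<in> comm_eigenspace N_op (log_op (polyL p)) c"
proof -
  obtain x y where x: "l2_conv (log_psum (polyL p) \<phi>) x" and y: "l2_conv (log_psum (polyL p) (num_mult \<phi>)) y"
    and l2: "\<phi> \<in> l2" "num_mult \<phi> \<in> l2" "num_mult x \<in> l2" and rel: "\<And>n. of_nat n * x n - y n = - c * \<phi> n"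
    using assms(1) unfolding mem_comm_eigenspace_N_log_iff by blast
  obtain x' y' where x': "l2_conv (log_psum (polyL p) \<psi>) x'" and y': "l2_conv (log_psum (polyL p) (num_mult \<psi>)) y'"
    and l2': "\<psi> \<in> l2" "num_mult \<psi> \<in> l2" "num_mult x' \<in> l2" and rel': "\<And>n. of_nat n * x' n - y' n = - c * \<psi> n"
    using assms(2) unfolding mem_comm_eigenspace_N_log_iff by blast
  have "l2_conv (log_psum (polyL p) (\<lambda>n. a * \<phi> n + \<psi> n)) (\<lambda>n. a * x n + x' n)"
    unfolding log_psum_polyL_lincomb by (rule l2_conv_lincomb[OF x x'])
  moreover have "l2_conv (log_psum (polyL p) (num_mult (\<lambda>n. a * \<phi> n + \<psi> n))) (\<lambda>n. a * y n + y' n)"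
    unfolding num_mult_lincomb log_psum_polyL_lincomb by (rule l2_conv_lincomb[OF y y'])
  moreover have "of_nat n * (a * x n + x' n) - (a * y n + y' n) = - c * (a * \<phi> n + \<psi> n)" for n
  proof -
    have "of_nat n * (a * x n + x' n) - (a * y n + y' n) = a * (of_nat n * x n - y n) + (of_nat n * x' n - y' n)"
      by (simp add: algebra_simps)
    then show ?thesis
      unfolding rel rel' by (simp add: algebra_simps)
  qed
  moreover have "num_mult (\<lambda>n. a * x n + x' n) \<in> l2"
    unfolding num_mult_lincomb using l2(3) l2'(3) by (rule l2_lincomb)
  moreover have "(\<lambda>n. a * \<phi> n + \<psi> n) \<in> l2" "num_mult (\<lambda>n. a * \<phi> n + \<psi> n) \<in> l2"
    unfolding num_mult_lincomb using l2 l2' by (auto intro: l2_lincomb)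
  ultimately show ?thesis
    unfolding mem_comm_eigenspace_N_log_iff by blast
qed

lemma csubspace_comm_eigenspace_N_log: "csubspace_seq (comm_eigenspace N_op (log_op (polyL p)) c)"
proof -
  let ?V = "comm_eigenspace N_op (log_op (polyL p)) c"
  have "(\<lambda>n. \<phi> n + \<psi> n) \<in> ?V" if "\<phi> \<in> ?V" "\<psi> \<in> ?V" for \<phi> \<psi>
    using comm_eigenspace_N_log_lincomb[OF that, of 1] by simp
  moreover have "(\<lambda>n. a * \<phi> n) \<in> ?V" if "\<phi> \<in> ?V" for a \<phi>
    using comm_eigenspace_N_log_lincomb[OF that zero_in_comm_eigenspace_N_log, of a] by simp
  ultimately show ?thesis
    unfolding csubspace_seq_def using zero_in_comm_eigenspace_N_log by blast
qed

lemma clinhull_subset_csubspace: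
  assumes V: "csubspace_seq V" and S: "S \<subseteq> V"
  shows "clinhull S \<subseteq> V"
proof -
  have "(\<lambda>n. \<Sum>i<m. a i * v i n) \<in> V" if "\<forall>i<m. v i \<in> S" for m :: nat and a v
    using that
  proof (induction m)
    case 0
    then show ?case using V unfolding csubspace_seq_def by simp
  next
    case (Suc m)
    then have "(\<lambda>n. a m * v m n) \<in> V" "(\<lambda>n. \<Sum>i<m. a i * v i n) \<in> V"
      using V S unfolding csubspace_seq_def by auto
    then show ?case
      using V unfolding csubspace_seq_def by (simp add: add.commute)
  qed
  then show ?thesis
    unfolding clinhull_def by blast
qed

lemma kerL_eq_geometric:
  assumes "\<phi> \<in> kerL \<alpha>"
  shows "\<phi> \<in> l2" and "\<phi> = (\<lambda>n. \<phi> 0 * \<alpha> ^ n)"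
proof -
  have step: "\<phi> (Suc n) = \<alpha> * \<phi> n" for n
    using assms unfolding kerL_def app_def L_op_def by (auto dest: fun_cong[of _ _ n])
  show "\<phi> \<in> l2"
    using assms unfolding kerL_def dom_def L_op_def by simp
  have "\<phi> n = \<phi> 0 * \<alpha> ^ n" for n
    by (induction n) (simp_all add: step)
  then show "\<phi> = (\<lambda>n. \<phi> 0 * \<alpha> ^ n)" ..
qed

lemma l2_geometric_imp_norm_less_1:
  assumes l2: "(\<lambda>n. a * \<alpha> ^ n) \<in> l2" and a: "a \<noteq> 0"
  shows "cmod \<alpha> < 1"
proof (rule ccontr)
  assume "\<not> cmod \<alpha> < 1"
  then have "cmod a * 1 \<le> cmod a * cmod \<alpha> ^ n" for n
    by (intro mult_left_mono one_le_power) auto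
  then have bound: "(cmod a)\<^sup>2 \<le> (cmod (a * \<alpha> ^ n))\<^sup>2" for n
    by (simp add: norm_mult norm_power power_mono)
  have "(\<lambda>n. (cmod (a * \<alpha> ^ n))\<^sup>2) \<longlonglongrightarrow> 0"
    using l2 unfolding l2_def mem_Collect_eq by (rule summable_LIMSEQ_zero)
  then have "(cmod a)\<^sup>2 \<le> 0"
    by (rule LIMSEQ_le_const) (use bound in blast)
  with a show False
    by simp
qed

lemma kerL_subset_comm_eigenspace:
  assumes "cmod (poly p \<alpha> - 1) < 1" "\<alpha> * poly (pderiv p) \<alpha> + c * poly p \<alpha> = 0"
  shows "kerL \<alpha> \<subseteq> comm_eigenspace N_op (log_op (polyL p)) c"
proof
  fix \<phi> assume "\<phi> \<in> kerL \<alpha>"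
  then have l2: "(\<lambda>n. \<phi> 0 * \<alpha> ^ n) \<in> l2" and \<phi>: "\<phi> = (\<lambda>n. \<phi> 0 * \<alpha> ^ n + 0)"
    using kerL_eq_geometric by auto
  show "\<phi> \<in> comm_eigenspace N_op (log_op (polyL p)) c"
  proof (cases "\<phi> 0 = 0")
    case True
    then show ?thesis
      using \<phi> zero_in_comm_eigenspace_N_log by simp
  next
    case False
    then have "cmod \<alpha> < 1"
      using l2_geometric_imp_norm_less_1[OF l2] by blast
    then show ?thesis
      by (subst \<phi>) (intro comm_eigenspace_N_log_lincomb geometric_in_comm_eigenspace
          zero_in_comm_eigenspace_N_log assms)
  qed
qed

lemma Dpc_subset_comm_eigenspace: "Dpc p c \<subseteq> comm_eigenspace N_op (log_op (polyL p)) c"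
  unfolding Dpc_def
  by (rule clinhull_subset_csubspace[OF csubspace_comm_eigenspace_N_log])
     (use kerL_subset_comm_eigenspace in blast)

lemma geometric_in_Dpc:
  assumes "cmod \<alpha> < 1" "cmod (poly p \<alpha> - 1) < 1" "\<alpha> * poly (pderiv p) \<alpha> + c * poly p \<alpha> = 0"
  shows "(\<lambda>n. \<alpha> ^ n) \<in> Dpc p c"
proof -
  have "(\<lambda>n. \<alpha> ^ n) \<in> dom N_op"
    unfolding dom_N_op using geometric_l2 num_mult_geometric_l2 assms(1) by blast
  moreover have "(\<lambda>n. \<alpha> ^ n) \<in> kerL \<alpha>"
    unfolding kerL_def dom_def app_def L_op_def using geometric_l2[OF assms(1)] by simp
  ultimately show ?thesis
    unfolding Dpc_def clinhull_def using assms(2,3)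
    by (intro CollectI exI[of _ 1] exI[of _ "\<lambda>_. 1"] exI[of _ "\<lambda>_ n. \<alpha> ^ n"]) auto
qed

theorem mainTheorem8:
  fixes p :: "complex poly" and c :: complex
  assumes "c \<noteq> 0"
  shows "((\<exists>\<alpha>. cmod \<alpha> < 1 \<and> \<alpha> * poly (pderiv p) \<alpha> + c * poly p \<alpha> = 0 \<and>
              cmod (poly p \<alpha> - 1) < 1) \<longrightarrow>
           Dpc p c \<noteq> {(\<lambda>n. 0)} \<and>
           comm_on N_op (scale_op (- \<i> / c) (log_op (polyL p))) (\<lambda>\<phi> n. - \<i> * \<phi> n) (Dpc p c))
       \<and> ((\<nexists>b m. p = monom b m) \<longrightarrow>
           (\<forall>D. csubspace_seq D \<and>
                D \<subseteq> Eset p \<inter> dom (comp N_op (log_op (polyL p))) \<inter> dom (comp (log_op (polyL p)) N_op) \<and>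
                (\<forall>\<phi>\<in>D. (\<lambda>n. app (comp N_op (log_op (polyL p))) \<phi> n
                           - app (comp (log_op (polyL p)) N_op) \<phi> n) = (\<lambda>n. c * \<phi> n))
              \<longrightarrow> findim_seq D))"
proof (intro conjI impI allI)
  assume "\<exists>\<alpha>. cmod \<alpha> < 1 \<and> \<alpha> * poly (pderiv p) \<alpha> + c * poly p \<alpha> = 0 \<and> cmod (poly p \<alpha> - 1) < 1"
  then obtain \<alpha> where "cmod \<alpha> < 1" "\<alpha> * poly (pderiv p) \<alpha> + c * poly p \<alpha> = 0" "cmod (poly p \<alpha> - 1) < 1"
    by blast
  then have "(\<lambda>n. \<alpha> ^ n) \<in> Dpc p c"
    by (intro geometric_in_Dpc)
  moreover have "(\<lambda>n. \<alpha> ^ n) \<noteq> (\<lambda>n. 0)"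
    by (auto dest: fun_cong[where x = 0])
  ultimately show "Dpc p c \<noteq> {(\<lambda>n. 0)}"
    by blast
  have "Dpc p c \<subseteq> comm_eigenspace N_op (scale_op (- \<i> / c) (log_op (polyL p))) (- \<i> / c * c)"
    using Dpc_subset_comm_eigenspace comm_eigenspace_N_op_scale by blast
  then show "comm_on N_op (scale_op (- \<i> / c) (log_op (polyL p))) (\<lambda>\<phi> n. - \<i> * \<phi> n) (Dpc p c)"
    unfolding comm_on_iff_subset_comm_eigenspace using assms by simp
next
  fix D
  assume not_monom: "\<nexists>b m. p = monom b m"
    and "csubspace_seq D \<and>
      D \<subseteq> Eset p \<inter> dom (comp N_op (log_op (polyL p))) \<inter> dom (comp (log_op (polyL p)) N_op) \<and>
      (\<forall>\<phi>\<in>D. (\<lambda>n. app (comp N_op (log_op (polyL p))) \<phi> n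
                 - app (comp (log_op (polyL p)) N_op) \<phi> n) = (\<lambda>n. c * \<phi> n))"
  then have "D \<subseteq> comm_eigenspace N_op (log_op (polyL p)) c"
    unfolding comm_eigenspace_def by auto
  then have "D \<subseteq> {f. \<forall>n. (\<Sum>j\<le>degree p. ((of_nat j + c) * coeff p j) * f (n + j)) = 0}"
    by (auto intro: comm_eigenspace_N_log_recurrence)
  moreover have "findim_seq {f. \<forall>n. (\<Sum>j\<le>degree p. ((of_nat j + c) * coeff p j) * f (n + j)) = 0}"
    by (intro findim_recurrence_solutions not_monom_imp_shifted_coeff_nonzero not_monom)
  ultimately show "findim_seq D"
    unfolding findim_seq_def by blast
qed

end
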